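(* Let $\mathcal{Q}\subset\mathcal{E}$ be a smooth embedded submanifold with projection function $\Pi$ for $T\mathcal{Q}$, and suppose $T\mathcal{Q}=\mathcal{H}\oplus\mathcal{V}$, $T^*\mathcal{Q}=\mathcal{H}^*\oplus\mathcal{V}^*$ with $\Pi=\mathsf{H}+\mathsf{V}$ as described in the context. Assume $\mathcal{V}$ is integrable (the Lie bracket of two vertical vector fields is vertical). For $(q,p_h)\in\mathcal{H}^*$ define $$\mathsf{B}(q,p_h)\epsilon=-\mathsf{H}(q)^{T}\{X\mapsto\mathsf{V}'(q;X)^{T}p_h\}^{T}\epsilon+\mathsf{H}'(q;\epsilon)^{T}p_h,$$ $$\mathcal{V}_{(q,p_h)}\mathcal{H}^*=\{(\epsilon,\mathsf{B}(q,p_h)\epsilon):\epsilon\in\mathcal{V}_q\},\quad \mathcal{H}_{(q,p_h)}\mathcal{H}^*=\{(\delta_q,\delta_p):\delta_q\in\mathcal{H}_q,\ \delta_p=\mathsf{H}(q)^{T}\delta_p+\mathsf{H}'(q;\delta_q)^{T}p_h\}.$$ Then $T_{(q,p_h)}\mathcal{H}^*=\mathcal{V}_{(q,p_h)}\mathcal{H}^*\oplus\mathcal{H}_{(q,p_h)}\mathcal{H}^*$, $\Omega(\mathcal{V}_{(q,p_h)}\mathcal{H}^*,T_{(q,p_h)}\mathcal{H}^* )=0$, $\mathcal{V}_{(q,p_h)}\mathcal{H}^*$ is exactly the kernel of $\Omega$ restricted to $T_{(q,p_h)}\mathcal{H}^*$, $\Omega$ restricted to $\mathcal{H}_{(q,p_h)}\mathcal{H}^*$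 is nondegenerate, and the map $\epsilon\mapsto(\epsilon,\mathsf{B}(q,p_h)\epsilon)$ is a bijection from $\mathcal{V}_q$ onto $\mathcal{V}_{(q,p_h)}\mathcal{H}^*$.
   Context: $\mathcal{E}$ is a finite-dimensional real inner product space (inner product $a\cdot b$, adjoint $A^{T}$); $\Pi:\mathcal{Q}\to\mathrm{Lin}(\mathcal{E},\mathcal{E})$ is smooth with $\Pi(q)$ idempotent with image $T_q\mathcal{Q}$, and $T^*_q\mathcal{Q}=\mathrm{Im}\,\Pi(q)^{T}$. Splitting: $\mathsf{H},\mathsf{V}:\mathcal{Q}\to\mathrm{Lin}(\mathcal{E},\mathcal{E})$ are smooth with $\mathsf{H}(q),\mathsf{V}(q)$ idempotent, $\mathsf{H}+\mathsf{V}=\Pi$, $\mathsf{H}\mathsf{V}=\mathsf{V}\mathsf{H}=0$, $\mathcal{H}_q=\mathrm{Im}\,\mathsf{H}(q)$, $\mathcal{V}_q=\mathrm{Im}\,\mathsf{V}(q)$, $\mathcal{H}^*_q=\mathrm{Im}\,\mathsf{H}(q)^{T}$, $\mathcal{V}^*_q=\mathrm{Im}\,\mathsf{V}(q)^{T}$. $\mathcal{H}^*=\{(q,p_h):p_h\in\mathcal{H}^*_q\}\subset\mathcal{E}^2$, with $T_{(q,p_h)}\mathcal{H}^*=\{(\Delta_q,\Delta_p):\Delta_q\in T_q\mathcal{Q},\ \Delta_p=\mathsf{H}(q)^{T}\Delta_p+\mathsf{H}'(q;\Delta_q)^{T}p_h\}$. $\Omega((a,b),(c,d))=a\cdot d-b\cdot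 c$. Primes denote directional derivatives. $\{X\mapsto\Psi'(q;X)e_1\}^{T}e_2$ denotes the unique $\Phi\in T_q\mathcal{Q}$ with $\Delta\cdot\Phi=e_2\cdot\Psi'(q;\Delta)e_1$ for all $\Delta\in T_q\mathcal{Q}$. *)

theory Defs
  imports "HOL-Analysis.Analysis"
begin

fun iter_dd :: "'a::real_normed_vector list \<Rightarrow> ('a \<Rightarrow> 'b::real_normed_vector) \<Rightarrow> 'a \<Rightarrow> 'b" where
  "iter_dd [] f = f"
| "iter_dd (v # vs) f = (\<lambda>x. frechet_derivative (iter_dd vs f) (at x) v)"

text \<open>f is smooth on the open set S: all iterated derivatives exist (Frechet) on S.
  For finite-dimensional domains this is exactly C-infinity.\<close>
definition smooth_on :: "'a::real_normed_vector set \<Rightarrow> ('a \<Rightarrow> 'b::real_normed_vector) \<Rightarrow> bool" where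
  "smooth_on S f \<longleftrightarrow> open S \<and> (\<forall>vs. \<forall>x\<in>S. iter_dd vs f differentiable (at x))"

definition embedded_submanifold :: "'e::euclidean_space set \<Rightarrow> bool" where
  "embedded_submanifold Q \<longleftrightarrow>
     (\<forall>q\<in>Q. \<exists>U W (\<phi>::'e \<Rightarrow> 'e) \<psi> L.
        open U \<and> q \<in> U \<and> open W \<and> smooth_on U \<phi> \<and> smooth_on W \<psi> \<and>
        \<phi> ` U = W \<and> (\<forall>x\<in>U. \<psi> (\<phi> x) = x) \<and> (\<forall>y\<in>W. \<phi> (\<psi> y) = y) \<and>
        subspace L \<and> \<phi> ` (Q \<inter> U) = W \<inter> L)"

definition tangent_space :: "'e::euclidean_space set \<Rightarrow> 'e \<Rightarrow> 'e set" where
  "tangent_space Q q = {v. \<exists>\<gamma>::real \<Rightarrow> 'e. (\<forall>t. \<gamma> t \<in> Q) \<and> \<gamma> 0 = q \<and>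
                                 (\<gamma> has_vector_derivative v) (at 0)}"

definition transp :: "('e::euclidean_space \<Rightarrow>\<^sub>L 'e) \<Rightarrow> 'e \<Rightarrow> 'e" where
  "transp A = adjoint (blinfun_apply A)"

definition dder :: "('e::euclidean_space \<Rightarrow> ('e \<Rightarrow>\<^sub>L 'e)) \<Rightarrow> 'e \<Rightarrow> 'e \<Rightarrow> ('e \<Rightarrow>\<^sub>L 'e)" where
  "dder F q X = frechet_derivative F (at q) X"

definition Omega :: "('e::euclidean_space \<times> 'e) \<Rightarrow> ('e \<times> 'e) \<Rightarrow> real" where
  "Omega z w = fst z \<bullet> snd w - snd z \<bullet> fst w"

text \<open>{X \<mapsto> Psi'(q;X) e1}^T e2 : the unique Phi in T_qQ with
  Delta . Phi = e2 . Psi'(q;Delta) e1 for all Delta in T_qQ.  Here the argument f is the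
  map Delta \<mapsto> Psi'(q;Delta) e1.\<close>
definition dtransp :: "'e::euclidean_space set \<Rightarrow> 'e \<Rightarrow> ('e \<Rightarrow> 'e) \<Rightarrow> 'e \<Rightarrow> 'e" where
  "dtransp Q q f e2 =
     (THE \<Phi>. \<Phi> \<in> tangent_space Q q \<and> (\<forall>\<Delta>\<in>tangent_space Q q. \<Delta> \<bullet> \<Phi> = e2 \<bullet> f \<Delta>))"

text \<open>A smooth vector field on Q, given by a smooth extension to an open neighbourhood of Q.\<close>
definition smooth_vector_field :: "'e::euclidean_space set \<Rightarrow> ('e \<Rightarrow> 'e) \<Rightarrow> bool" where
  "smooth_vector_field Q X \<longleftrightarrow> (\<exists>U. Q \<subseteq> U \<and> smooth_on U X) \<and> (\<forall>q\<in>Q. X q \<in> tangent_space Q q)"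

definition lie_bracket :: "('e::euclidean_space \<Rightarrow> 'e) \<Rightarrow> ('e \<Rightarrow> 'e) \<Rightarrow> 'e \<Rightarrow> 'e" where
  "lie_bracket X Y q = frechet_derivative Y (at q) (X q) - frechet_derivative X (at q) (Y q)"

definition integrable_distribution :: "'e::euclidean_space set \<Rightarrow> ('e \<Rightarrow> ('e \<Rightarrow>\<^sub>L 'e)) \<Rightarrow> bool" where
  "integrable_distribution Q V \<longleftrightarrow>
     (\<forall>X Y. smooth_vector_field Q X \<and> smooth_vector_field Q Y \<and>
            (\<forall>q\<in>Q. X q \<in> range (blinfun_apply (V q)) \<and> Y q \<in> range (blinfun_apply (V q))) \<longrightarrow>
            (\<forall>q\<in>Q. lie_bracket X Y q \<in> range (blinfun_apply (V q))))"

definition Bmap :: "'e::euclidean_space set \<Rightarrow> ('e \<Rightarrow> ('e \<Rightarrow>\<^sub>L 'e)) \<Rightarrow> ('e \<Rightarrow> ('e \<Rightarrow>\<^sub>L 'e))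
                    \<Rightarrow> 'e \<Rightarrow> 'e \<Rightarrow> 'e \<Rightarrow> 'e" where
  "Bmap Q H V q ph \<epsilon> =
     - transp (H q) (dtransp Q q (\<lambda>X. transp (dder V q X) ph) \<epsilon>) + transp (dder H q \<epsilon>) ph"

definition tangent_Hstar :: "'e::euclidean_space set \<Rightarrow> ('e \<Rightarrow> ('e \<Rightarrow>\<^sub>L 'e)) \<Rightarrow> 'e \<Rightarrow> 'e \<Rightarrow> ('e \<times> 'e) set" where
  "tangent_Hstar Q H q ph = {(dq, dp). dq \<in> tangent_space Q q \<and>
        dp = transp (H q) dp + transp (dder H q dq) ph}"

definition vert_Hstar :: "'e::euclidean_space set \<Rightarrow> ('e \<Rightarrow> ('e \<Rightarrow>\<^sub>L 'e)) \<Rightarrow> ('e \<Rightarrow> ('e \<Rightarrow>\<^sub>L 'e))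
                    \<Rightarrow> 'e \<Rightarrow> 'e \<Rightarrow> ('e \<times> 'e) set" where
  "vert_Hstar Q H V q ph = {(\<epsilon>, Bmap Q H V q ph \<epsilon>) | \<epsilon>. \<epsilon> \<in> range (blinfun_apply (V q))}"

definition horiz_Hstar :: "('e::euclidean_space \<Rightarrow> ('e \<Rightarrow>\<^sub>L 'e)) \<Rightarrow> 'e \<Rightarrow> 'e \<Rightarrow> ('e \<times> 'e) set" where
  "horiz_Hstar H q ph = {(dq, dp). dq \<in> range (blinfun_apply (H q)) \<and>
        dp = transp (H q) dp + transp (dder H q dq) ph}"

end

theory Submission
  imports Defs
begin

text \<open>
  Differentiating \<open>H \<circ> H = H\<close> and \<open>H \<circ> V = 0\<close> along curves in \<open>Q\<close> gives, for tangent \<open>X\<close>,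
  \<open>H'(q;X) H + H H'(q;X) = H'(q;X)\<close> and \<open>H'(q;X) V + H V'(q;X) = 0\<close>. Since \<open>p\<^sub>h = H\<^sup>T p\<^sub>h\<close>,
  the first identity kills \<open>p\<^sub>h \<bullet> H'(q;X) H u\<close>, and together with the symmetry of
  \<open>(a, b) \<mapsto> p\<^sub>h \<bullet> H'(q;a) b\<close> on vertical vectors, which is where integrability of \<open>\<V>\<close> enters,
  they give \<open>B(q,p\<^sub>h)\<epsilon> \<bullet> \<delta>\<^sub>q = p\<^sub>h \<bullet> H'(q;\<delta>\<^sub>q) \<epsilon> = \<epsilon> \<bullet> \<delta>\<^sub>p\<close> for every tangent vector
  \<open>(\<delta>\<^sub>q, \<delta>\<^sub>p)\<close> of \<open>\<H>\<^sup>*\<close>. So \<open>\<Omega>\<close> vanishes on the vertical space against all tangent vectors.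
  On the horizontal space \<open>\<Omega>\<close> is nondegenerate: pair \<open>(h, p)\<close> first with \<open>(0, H\<^sup>T h)\<close>, then with
  \<open>(H p, H'(q; H p)\<^sup>T p\<^sub>h)\<close>. The splitting \<open>\<delta>\<^sub>q = H \<delta>\<^sub>q + V \<delta>\<^sub>q\<close> yields the direct sum, and the
  kernel of \<open>\<Omega>\<close> is then exactly the vertical space.
\<close>

lemma has_derivative_blinfun_apply_const:
  fixes V :: "'a::real_normed_vector \<Rightarrow> ('b::real_normed_vector \<Rightarrow>\<^sub>L 'c::real_normed_vector)"
  assumes "(V has_derivative dV) (at x)"
  shows "((\<lambda>y. V y b) has_derivative (\<lambda>d. dV d b)) (at x)"
  using bounded_bilinear.FDERIV[OF bounded_bilinear_blinfun_apply assms has_derivative_const[of b]]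
  by simp

lemma iter_dd_blinfun_apply:
  fixes V :: "'a::real_normed_vector \<Rightarrow> ('b::real_normed_vector \<Rightarrow>\<^sub>L 'c::real_normed_vector)"
  assumes "smooth_on U V" and "x \<in> U"
  shows "iter_dd vs (\<lambda>y. V y b) x = iter_dd vs V x b"
  using assms(2)
proof (induction vs arbitrary: x)
  case Nil
  then show ?case by simp
next
  case (Cons w vs)
  have "open U" and "iter_dd vs V differentiable (at x)"
    using assms(1) Cons.prems unfolding smooth_on_def by auto
  then have "((\<lambda>y. iter_dd vs V y b) has_derivative
      (\<lambda>d. frechet_derivative (iter_dd vs V) (at x) d b)) (at x)"
    by (intro has_derivative_blinfun_apply_const) (simp add: frechet_derivative_works)
  then have deriv: "(iter_dd vs (\<lambda>y. V y b) has_derivative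
      (\<lambda>d. frechet_derivative (iter_dd vs V) (at x) d b)) (at x)"
    using has_derivative_transform_within_open[OF _ \<open>open U\<close> Cons.prems] Cons.IH by metis
  show ?case by (simp add: frechet_derivative_at[OF deriv, symmetric])
qed

lemma smooth_on_blinfun_apply:
  fixes V :: "'a::real_normed_vector \<Rightarrow> ('b::real_normed_vector \<Rightarrow>\<^sub>L 'c::real_normed_vector)"
  assumes "smooth_on U V"
  shows "smooth_on U (\<lambda>y. V y b)"
  unfolding smooth_on_def
proof (intro conjI allI ballI)
  show "open U" using assms unfolding smooth_on_def by blast
  fix vs x assume "x \<in> U"
  have "iter_dd vs V differentiable (at x)"
    using assms \<open>x \<in> U\<close> unfolding smooth_on_def by blast
  then have "((\<lambda>y. iter_dd vs V y b) has_derivative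
      (\<lambda>d. frechet_derivative (iter_dd vs V) (at x) d b)) (at x)"
    by (intro has_derivative_blinfun_apply_const) (simp add: frechet_derivative_works)
  then show "iter_dd vs (\<lambda>y. V y b) differentiable (at x)"
    using has_derivative_transform_within_open[OF _ \<open>open U\<close> \<open>x \<in> U\<close>]
      iter_dd_blinfun_apply[OF assms] unfolding differentiable_def by metis
qed

lemma tangent_space_product_rule:
  fixes F G K :: "'e::euclidean_space \<Rightarrow> ('e \<Rightarrow>\<^sub>L 'e)"
  assumes dF: "(F has_derivative dF) (at q)" and dG: "(G has_derivative dG) (at q)"
    and dK: "(K has_derivative dK) (at q)"
    and FGK: "\<And>y. y \<in> Q \<Longrightarrow> F y o\<^sub>L G y = K y"
    and x: "x \<in> tangent_space Q q"
  shows "(F q o\<^sub>L dG x) + (dF x o\<^sub>L G q) = dK x"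
proof -
  obtain \<gamma> where \<gamma>Q: "\<And>t. \<gamma> t \<in> Q" and \<gamma>0: "\<gamma> 0 = q"
    and \<gamma>': "(\<gamma> has_derivative (\<lambda>s. s *\<^sub>R x)) (at 0)"
    using x unfolding tangent_space_def has_vector_derivative_def by blast
  have chain: "((\<lambda>t. M (\<gamma> t)) has_derivative (\<lambda>s. dM (s *\<^sub>R x))) (at 0)"
    if "(M has_derivative dM) (at q)" for M :: "'e \<Rightarrow> ('e \<Rightarrow>\<^sub>L 'e)" and dM
    by (rule has_derivative_compose[OF \<gamma>']) (simp add: \<gamma>0 that)
  have "((\<lambda>t. K (\<gamma> t)) has_derivative
      (\<lambda>s. (F q o\<^sub>L dG (s *\<^sub>R x)) + (dF (s *\<^sub>R x) o\<^sub>L G q))) (at 0)"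
    using bounded_bilinear.FDERIV[OF bounded_bilinear_blinfun_compose chain[OF dF] chain[OF dG]]
    by (simp add: FGK \<gamma>Q \<gamma>0)
  then have "(\<lambda>s. (F q o\<^sub>L dG (s *\<^sub>R x)) + (dF (s *\<^sub>R x) o\<^sub>L G q)) = (\<lambda>s. dK (s *\<^sub>R x))"
    by (rule has_derivative_unique[OF _ chain[OF dK]])
  from fun_cong[OF this, of 1] show ?thesis by simp
qed

lemma inner_transp: "u \<bullet> transp A w = A u \<bullet> w"
  unfolding transp_def by (simp add: adjoint_works blinfun.bounded_linear_right bounded_linear.linear)

lemma transp_inner: "transp A w \<bullet> u = w \<bullet> A u"
  using inner_transp[of u A w] by (simp add: inner_commute)

lemma linear_transp: "linear (transp A)"
  unfolding transp_def by (simp add: adjoint_linear blinfun.bounded_linear_right bounded_linear.linear)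

lemma transp_transp: "transp A (transp B w) = transp (B o\<^sub>L A) w"
  by (rule vector_eq_ldot[THEN iffD1]) (simp add: inner_transp)

lemma linear_transp_blinfun:
  assumes "linear f"
  shows "linear (\<lambda>a. transp (f a) w)"
proof (rule linearI)
  show "transp (f (a + b)) w = transp (f a) w + transp (f b) w" for a b
    by (rule vector_eq_ldot[THEN iffD1])
      (simp add: inner_transp linear_add[OF assms] blinfun.add_left inner_add)
  show "transp (f (c *\<^sub>R a)) w = c *\<^sub>R transp (f a) w" for c a
    by (rule vector_eq_ldot[THEN iffD1])
      (simp add: inner_transp linear_scale[OF assms] blinfun.scaleR_left)
qed

lemma subspace_riesz_representation:
  fixes T :: "'e::euclidean_space set"
  assumes T: "subspace T" and g: "linear g"
  shows "\<exists>!\<Phi>. \<Phi> \<in> T \<and> (\<forall>\<Delta>\<in>T. \<Delta> \<bullet> \<Phi> = g \<Delta>)"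
proof -
  have r: "\<Delta> \<bullet> adjoint g 1 = g \<Delta>" for \<Delta>
    using adjoint_works[OF g] by simp
  obtain y z where y: "y \<in> span T" and z: "\<And>w. w \<in> span T \<Longrightarrow> orthogonal z w"
    and yz: "adjoint g 1 = y + z"
    using orthogonal_subspace_decomp_exists by blast
  have "y \<in> T" using y T by (metis span_eq_iff)
  moreover have "\<Delta> \<bullet> y = g \<Delta>" if "\<Delta> \<in> T" for \<Delta>
  proof -
    have "z \<bullet> \<Delta> = 0" using z[OF span_base[OF that]] by (simp add: orthogonal_def)
    then show ?thesis using r[of \<Delta>] yz by (simp add: inner_add_right inner_commute)
  qed
  moreover have "\<Phi> = y" if "\<Phi> \<in> T" "\<forall>\<Delta>\<in>T. \<Delta> \<bullet> \<Phi> = g \<Delta>" for \<Phi>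
  proof -
    have "\<Phi> - y \<in> T" using that \<open>y \<in> T\<close> T subspace_diff by blast
    then have "(\<Phi> - y) \<bullet> (\<Phi> - y) = 0"
      using that \<open>\<And>\<Delta>. \<Delta> \<in> T \<Longrightarrow> \<Delta> \<bullet> y = g \<Delta>\<close> by (simp add: inner_diff_right)
    then show ?thesis by simp
  qed
  ultimately show ?thesis by blast
qed

lemma dtransp_works:
  assumes "subspace (tangent_space Q q)" and "linear f"
  shows "dtransp Q q f e \<in> tangent_space Q q
    \<and> (\<forall>\<Delta>\<in>tangent_space Q q. \<Delta> \<bullet> dtransp Q q f e = e \<bullet> f \<Delta>)"
proof -
  have "linear (\<lambda>\<Delta>. e \<bullet> f \<Delta>)"
    using assms(2) by (simp add: linear_iff inner_add_right)
  then show ?thesis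
    unfolding dtransp_def by (rule theI'[OF subspace_riesz_representation[OF assms(1)]])
qed

lemma dtransp_unique:
  assumes "subspace (tangent_space Q q)" and "linear f"
    and "\<Phi> \<in> tangent_space Q q" and "\<forall>\<Delta>\<in>tangent_space Q q. \<Delta> \<bullet> \<Phi> = e \<bullet> f \<Delta>"
  shows "dtransp Q q f e = \<Phi>"
proof -
  have "linear (\<lambda>\<Delta>. e \<bullet> f \<Delta>)"
    using assms(2) by (simp add: linear_iff inner_add_right)
  then show ?thesis
    using subspace_riesz_representation[OF assms(1)] dtransp_works[OF assms(1,2)] assms(3,4)
    by blast
qed

lemma linear_dtransp:
  assumes T: "subspace (tangent_space Q q)" and f: "linear f"
  shows "linear (dtransp Q q f)"
proof (rule linearI)
  fix a b c
  show "dtransp Q q f (a + b) = dtransp Q q f a + dtransp Q q f b"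
    using dtransp_works[OF T f, of a] dtransp_works[OF T f, of b]
    by (intro dtransp_unique[OF T f]) (auto simp: subspace_add[OF T] inner_add)
  show "dtransp Q q f (c *\<^sub>R a) = c *\<^sub>R dtransp Q q f a"
    using dtransp_works[OF T f, of a]
    by (intro dtransp_unique[OF T f]) (auto simp: subspace_scale[OF T])
qed

lemma subspace_range_blinfun: "subspace (range (blinfun_apply A))"
  by (simp add: linear_subspace_image blinfun.bounded_linear_right bounded_linear.linear)

lemma subspace_constrained_pairs:
  assumes S: "subspace S" and f: "linear f" and g: "linear g"
  shows "subspace {(x, y). x \<in> S \<and> y = f y + g x}"
  unfolding subspace_def
  using subspace_0[OF S] subspace_add[OF S] subspace_scale[OF S]
  by (auto simp: linear_0[OF f] linear_0[OF g] linear_add[OF f] linear_add[OF g]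
      linear_scale[OF f] linear_scale[OF g] zero_prod_def)
    (metis add.assoc add.left_commute, metis scaleR_add_right)

lemma Omega_add_left: "Omega (a + b) c = Omega a c + Omega b c"
  by (simp add: Omega_def inner_add_left)

text \<open>
  The hypotheses of the theorem at a point \<open>(q, p\<^sub>h)\<close>, minus the two it never uses: the slice-chart
  structure of \<open>Q\<close> and the smoothness of \<open>Pi\<close>. Only first derivatives of \<open>H\<close> and \<open>V\<close> at \<open>q\<close>
  and the identity \<open>T\<^sub>q\<Q> = range (Pi q)\<close> are needed.
\<close>

locale vertical_splitting =
  fixes Q U :: "'e::euclidean_space set"
    and Pi H V :: "'e \<Rightarrow> ('e \<Rightarrow>\<^sub>L 'e)"
    and q ph :: 'e
  assumes nbhd: "Q \<subseteq> U"
    and smooth_H: "smooth_on U H" and smooth_V: "smooth_on U V"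
    and Pi_idem: "\<forall>x\<in>Q. Pi x o\<^sub>L Pi x = Pi x"
    and Pi_image: "\<forall>x\<in>Q. range (blinfun_apply (Pi x)) = tangent_space Q x"
    and H_idem: "\<forall>x\<in>Q. H x o\<^sub>L H x = H x"
    and V_idem: "\<forall>x\<in>Q. V x o\<^sub>L V x = V x"
    and split: "\<forall>x\<in>Q. H x + V x = Pi x"
    and HV: "\<forall>x\<in>Q. H x o\<^sub>L V x = 0"
    and VH: "\<forall>x\<in>Q. V x o\<^sub>L H x = 0"
    and integrable: "integrable_distribution Q V"
    and q: "q \<in> Q"
    and ph: "ph \<in> range (transp (H q))"
begin

abbreviation "TQ \<equiv> tangent_space Q q"
abbreviation "dH \<equiv> dder H q"
abbreviation "dV \<equiv> dder V q"
abbreviation "B \<equiv> Bmap Q H V q ph"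
abbreviation "Phi \<equiv> dtransp Q q (\<lambda>X. transp (dder V q X) ph)"

lemma H_H [simp]: "x \<in> Q \<Longrightarrow> H x (H x u) = H x u"
  using H_idem by (metis blinfun_apply_blinfun_compose)

lemma V_V [simp]: "x \<in> Q \<Longrightarrow> V x (V x u) = V x u"
  using V_idem by (metis blinfun_apply_blinfun_compose)

lemma H_V [simp]: "x \<in> Q \<Longrightarrow> H x (V x u) = 0"
  using HV by (metis blinfun_apply_blinfun_compose zero_blinfun.rep_eq)

lemma V_H [simp]: "x \<in> Q \<Longrightarrow> V x (H x u) = 0"
  using VH by (metis blinfun_apply_blinfun_compose zero_blinfun.rep_eq)

lemma Pi_eq: "x \<in> Q \<Longrightarrow> Pi x u = H x u + V x u"
  using split by (metis plus_blinfun.rep_eq)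

lemma V_in_tangent_space: "x \<in> Q \<Longrightarrow> V x u \<in> tangent_space Q x"
  using Pi_image Pi_eq[of x "V x u"] by (metis H_V V_V add_0 rangeI)

lemma H_in_tangent_space: "H q u \<in> TQ"
  using Pi_image Pi_eq[OF q, of "H q u"] q by (metis H_H V_H add_0_right rangeI)

lemma tangent_space_decomp: "x \<in> TQ \<Longrightarrow> H q x + V q x = x"
  using Pi_image Pi_idem q Pi_eq[OF q] by (metis blinfun_apply_blinfun_compose rangeE)

lemma subspace_tangent_space: "subspace TQ"
  using Pi_image q by (metis linear_subspace_image subspace_UNIV
      blinfun.bounded_linear_right bounded_linear.linear)

lemma vertical_in_tangent_space: "e \<in> range (V q) \<Longrightarrow> e \<in> TQ"
  using V_in_tangent_space q by blast

lemma has_derivative_dder: "smooth_on U F \<Longrightarrow> (F has_derivative dder F q) (at q)"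
  using nbhd q unfolding smooth_on_def dder_def
  by (metis frechet_derivative_works iter_dd.simps(1) subsetD)

lemma linear_dH: "linear dH"
  using has_derivative_dder[OF smooth_H] has_derivative_linear by blast

lemma linear_dV: "linear dV"
  using has_derivative_dder[OF smooth_V] has_derivative_linear by blast

lemma dH_H:
  assumes "x \<in> TQ"
  shows "dH x (H q u) + H q (dH x u) = dH x u"
proof -
  have "(H q o\<^sub>L dH x) + (dH x o\<^sub>L H q) = dH x"
    using H_idem by (intro tangent_space_product_rule[OF has_derivative_dder[OF smooth_H]
        has_derivative_dder[OF smooth_H] has_derivative_dder[OF smooth_H] _ assms]) blast
  then have "blinfun_apply ((H q o\<^sub>L dH x) + (dH x o\<^sub>L H q)) u = dH x u" by simp
  then show ?thesis by (simp add: blinfun.add_left add.commute)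
qed

lemma dH_V:
  assumes "x \<in> TQ"
  shows "dH x (V q u) + H q (dV x u) = 0"
proof -
  have "(H q o\<^sub>L dV x) + (dH x o\<^sub>L V q) = 0"
    using HV by (intro tangent_space_product_rule[OF has_derivative_dder[OF smooth_H]
        has_derivative_dder[OF smooth_V] has_derivative_const _ assms]) blast
  then have "blinfun_apply ((H q o\<^sub>L dV x) + (dH x o\<^sub>L V q)) u = 0" by simp
  then show ?thesis by (simp add: blinfun.add_left add.commute)
qed

lemma smooth_vector_field_vertical: "smooth_vector_field Q (\<lambda>y. V y a)"
  unfolding smooth_vector_field_def
  using nbhd smooth_on_blinfun_apply[OF smooth_V] V_in_tangent_space by blast

text \<open>The Lie bracket of the vertical fields \<open>y \<mapsto> V y a\<close> and \<open>y \<mapsto> V y b\<close> at \<open>q\<close> is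
  \<open>V'(q;a) b - V'(q;b) a\<close>; its vanishing horizontal part is this symmetry.\<close>

lemma H_dH_vertical_sym:
  assumes a: "a \<in> range (V q)" and b: "b \<in> range (V q)"
  shows "H q (dH a b) = H q (dH b a)"
proof -
  have Va: "V q a = a" and Vb: "V q b = b" using a b q by auto
  have "lie_bracket (\<lambda>y. V y a) (\<lambda>y. V y b) q \<in> range (V q)"
    using integrable q smooth_vector_field_vertical unfolding integrable_distribution_def by blast
  moreover have "lie_bracket (\<lambda>y. V y a) (\<lambda>y. V y b) q = dV a b - dV b a"
    unfolding lie_bracket_def Va Vb
    by (simp add: frechet_derivative_at[OF has_derivative_blinfun_apply_const[OF
          has_derivative_dder[OF smooth_V]], symmetric])
  ultimately obtain w where "dV a b - dV b a = V q w" by auto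
  then have "H q (dV a b) - H q (dV b a) = 0"
    using q by (metis H_V blinfun.diff_right)
  then have "H q (dV a b) = H q (dV b a)" by simp
  moreover have "H q (dV a b) = - dH a b" and "H q (dV b a) = - dH b a"
    using dH_V[OF vertical_in_tangent_space[OF a], of b] dH_V[OF vertical_in_tangent_space[OF b], of a]
    by (simp_all add: Va Vb add_eq_0_iff)
  ultimately show ?thesis by simp
qed

lemma inner_ph_H: "ph \<bullet> H q u = ph \<bullet> u"
proof -
  obtain w where "ph = transp (H q) w" using ph by blast
  then show ?thesis using q by (simp add: transp_inner)
qed

lemma inner_ph_dH_H:
  assumes "x \<in> TQ"
  shows "ph \<bullet> dH x (H q u) = 0"
proof -
  have "dH x (H q u) = dH x u - H q (dH x u)"
    using dH_H[OF assms] by (metis add_diff_cancel_right')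
  then show ?thesis by (simp add: inner_diff_right inner_ph_H)
qed

lemma transp_H_transp_dH: "x \<in> TQ \<Longrightarrow> transp (H q) (transp (dH x) ph) = 0"
  by (rule vector_eq_ldot[THEN iffD1]) (simp add: inner_transp inner_commute[of _ ph] inner_ph_dH_H)

lemma transp_H_idem: "transp (H q) (transp (H q) w) = transp (H q) w"
  using H_idem q by (simp add: transp_transp)

lemma Phi_representation: "Phi e \<in> TQ \<and> (\<forall>\<Delta>\<in>TQ. \<Delta> \<bullet> Phi e = dV \<Delta> e \<bullet> ph)"
  using dtransp_works[OF subspace_tangent_space linear_transp_blinfun[OF linear_dV]]
  by (simp add: inner_transp)

lemma linear_B: "linear B"
proof -
  have "linear Phi"
    by (rule linear_dtransp[OF subspace_tangent_space linear_transp_blinfun[OF linear_dV]])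
  then show ?thesis
    unfolding Bmap_def
    by (intro linear_compose_add linear_compose_neg linear_compose[OF _ linear_transp, unfolded o_def]
        linear_transp_blinfun linear_dH)
qed

lemma B_tangent_equation: "e \<in> TQ \<Longrightarrow> transp (H q) (B e) + transp (dH e) ph = B e"
  by (simp add: Bmap_def linear_add[OF linear_transp] linear_diff[OF linear_transp]
      transp_H_idem transp_H_transp_dH)

lemma inner_B_tangent:
  assumes e: "e \<in> range (V q)" and dq: "dq \<in> TQ"
  shows "B e \<bullet> dq = ph \<bullet> dH dq e"
proof -
  have eT: "e \<in> TQ" and Ve: "V q e = e"
    using e q vertical_in_tangent_space by auto
  have "Phi e \<bullet> H q dq = ph \<bullet> dV (H q dq) e"
    using Phi_representation[of e] H_in_tangent_space[of dq] by (simp add: inner_commute)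
  also have "\<dots> = ph \<bullet> H q (dV (H q dq) e)"
    by (rule inner_ph_H[symmetric])
  also have "\<dots> = - (ph \<bullet> dH (H q dq) e)"
    using dH_V[OF H_in_tangent_space, of dq e] Ve by (simp add: add_eq_0_iff)
  finally have Phi_part: "Phi e \<bullet> H q dq = - (ph \<bullet> dH (H q dq) e)" .
  have "ph \<bullet> dH e dq = ph \<bullet> dH e (H q dq) + ph \<bullet> dH e (V q dq)"
    using tangent_space_decomp[OF dq] by (metis blinfun.add_right inner_add_right)
  also have "\<dots> = ph \<bullet> H q (dH e (V q dq))"
    by (simp add: inner_ph_dH_H[OF eT] inner_ph_H)
  also have "\<dots> = ph \<bullet> dH (V q dq) e"
    using H_dH_vertical_sym[OF e, of "V q dq"] by (simp add: inner_ph_H)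
  finally have dH_part: "ph \<bullet> dH e dq = ph \<bullet> dH (V q dq) e" .
  have "B e \<bullet> dq = - (Phi e \<bullet> H q dq) + ph \<bullet> dH e dq"
    by (simp add: Bmap_def inner_add_left inner_diff_left transp_inner)
  also have "\<dots> = ph \<bullet> dH (H q dq + V q dq) e"
    by (simp add: Phi_part dH_part linear_add[OF linear_dH] blinfun.add_left inner_add_right)
  finally show ?thesis using tangent_space_decomp[OF dq] by simp
qed

lemma vert_Hstar_eq_image: "vert_Hstar Q H V q ph = (\<lambda>\<epsilon>. (\<epsilon>, B \<epsilon>)) ` range (V q)"
  unfolding vert_Hstar_def by auto

lemma subspace_vert_Hstar: "subspace (vert_Hstar Q H V q ph)"
proof -
  have "linear (\<lambda>\<epsilon>. (\<epsilon>, B \<epsilon>))"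
    by (rule linearI) (simp_all add: linear_add[OF linear_B] linear_scale[OF linear_B])
  then show ?thesis
    unfolding vert_Hstar_eq_image by (rule linear_subspace_image[OF _ subspace_range_blinfun])
qed

lemma subspace_horiz_Hstar: "subspace (horiz_Hstar H q ph)"
  unfolding horiz_Hstar_def
  by (rule subspace_constrained_pairs[OF subspace_range_blinfun linear_transp
        linear_transp_blinfun[OF linear_dH]])

lemma vert_Hstar_subset: "vert_Hstar Q H V q ph \<subseteq> tangent_Hstar Q H q ph"
  unfolding vert_Hstar_eq_image tangent_Hstar_def
  using vertical_in_tangent_space B_tangent_equation by auto

lemma horiz_Hstar_subset: "horiz_Hstar H q ph \<subseteq> tangent_Hstar Q H q ph"
  unfolding horiz_Hstar_def tangent_Hstar_def using H_in_tangent_space by auto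

lemma Omega_vert_tangent:
  assumes "a \<in> vert_Hstar Q H V q ph" and "b \<in> tangent_Hstar Q H q ph"
  shows "Omega a b = 0"
proof -
  obtain e where e: "e \<in> range (V q)" and a: "a = (e, B e)"
    using assms(1) unfolding vert_Hstar_eq_image by blast
  obtain dq dp where b: "b = (dq, dp)" and dq: "dq \<in> TQ"
    and dp: "dp = transp (H q) dp + transp (dH dq) ph"
    using assms(2) unfolding tangent_Hstar_def by blast
  have "e \<bullet> dp = e \<bullet> (transp (H q) dp + transp (dH dq) ph)"
    by (rule arg_cong[OF dp])
  also have "\<dots> = H q e \<bullet> dp + ph \<bullet> dH dq e"
    by (simp add: inner_add_right inner_transp inner_commute)
  also have "H q e = 0"
    using e q by auto
  finally show ?thesis
    unfolding a b Omega_def using inner_B_tangent[OF e dq] by simp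
qed

lemma horiz_Hstar_liftI: "x \<in> range (H q) \<Longrightarrow> (x, transp (dH x) ph) \<in> horiz_Hstar H q ph"
  unfolding horiz_Hstar_def using transp_H_transp_dH H_in_tangent_space by auto

lemma horiz_Hstar_fibreI: "(0, transp (H q) w) \<in> horiz_Hstar H q ph"
  unfolding horiz_Hstar_def
  using linear_0[OF linear_transp_blinfun[OF linear_dH]] transp_H_idem
  by (auto intro: range_eqI[of _ _ 0])

lemma Omega_horiz_nondegenerate:
  assumes a: "a \<in> horiz_Hstar H q ph" and null: "\<forall>b\<in>horiz_Hstar H q ph. Omega a b = 0"
  shows "a = 0"
proof -
  obtain h p where a_eq: "a = (h, p)" and h: "h \<in> range (H q)"
    and p: "p = transp (H q) p + transp (dH h) ph"
    using a unfolding horiz_Hstar_def by blast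
  have "h \<bullet> h = Omega a (0, transp (H q) h)"
    using h q by (auto simp: a_eq Omega_def inner_transp)
  then have h0: "h = 0"
    using null horiz_Hstar_fibreI by simp
  have "- (p \<bullet> H q p) = Omega a (H q p, transp (dH (H q p)) ph)"
    by (simp add: a_eq Omega_def h0)
  then have "p \<bullet> H q p = 0"
    using null horiz_Hstar_liftI[of "H q p"] by simp
  moreover have "p = transp (H q) p"
    using p h0 linear_0[OF linear_transp_blinfun[OF linear_dH]] by simp
  ultimately have "p \<bullet> p = 0"
    by (metis transp_inner)
  then show ?thesis using a_eq h0 by (simp add: zero_prod_def)
qed

lemma vert_Hstar_Int_horiz_Hstar: "vert_Hstar Q H V q ph \<inter> horiz_Hstar H q ph = {0}"
proof (intro equalityI subsetI)
  fix z assume z: "z \<in> vert_Hstar Q H V q ph \<inter> horiz_Hstar H q ph"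
  then obtain e where e: "e \<in> range (V q)" and z_eq: "z = (e, B e)"
    unfolding vert_Hstar_eq_image by blast
  moreover have "e \<in> range (H q)"
    using z z_eq unfolding horiz_Hstar_def by auto
  ultimately have "e = 0"
    using q by (metis H_H H_V rangeE)
  then show "z \<in> {0}"
    using z_eq linear_0[OF linear_B] by (simp add: zero_prod_def)
next
  fix z :: "'e \<times> 'e" assume "z \<in> {0}"
  then show "z \<in> vert_Hstar Q H V q ph \<inter> horiz_Hstar H q ph"
    using subspace_0[OF subspace_vert_Hstar] subspace_0[OF subspace_horiz_Hstar] by simp
qed

lemma vert_horiz_sum_unique:
  assumes "v \<in> vert_Hstar Q H V q ph" "v' \<in> vert_Hstar Q H V q ph"
    and "h \<in> horiz_Hstar H q ph" "h' \<in> horiz_Hstar H q ph"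
    and "v + h = v' + h'"
  shows "v = v' \<and> h = h'"
proof -
  have "v - v' = h' - h"
    using assms(5) by (simp add: algebra_simps)
  moreover have "v - v' \<in> vert_Hstar Q H V q ph"
    using assms(1,2) subspace_diff[OF subspace_vert_Hstar] by blast
  moreover have "h' - h \<in> horiz_Hstar H q ph"
    using assms(3,4) subspace_diff[OF subspace_horiz_Hstar] by blast
  ultimately have "v - v' = 0" and "h' - h = 0"
    using vert_Hstar_Int_horiz_Hstar by (metis IntI singletonD)+
  then show ?thesis by simp
qed

lemma tangent_Hstar_split:
  assumes z: "z \<in> tangent_Hstar Q H q ph"
  obtains v h where "v \<in> vert_Hstar Q H V q ph" "h \<in> horiz_Hstar H q ph" "z = v + h"
proof -
  obtain dq dp where z_eq: "z = (dq, dp)" and dq: "dq \<in> TQ"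
    and dp: "transp (H q) dp + transp (dH dq) ph = dp"
    using z unfolding tangent_Hstar_def by auto
  define e where "e = V q dq"
  have e: "e \<in> range (V q)" by (simp add: e_def)
  have "transp (dH (H q dq)) ph = transp (dH dq) ph - transp (dH e) ph"
    using tangent_space_decomp[OF dq] linear_add[OF linear_transp_blinfun[OF linear_dH]]
    unfolding e_def by (metis add_diff_cancel_right')
  then have "transp (H q) (dp - B e) + transp (dH (H q dq)) ph
      = (transp (H q) dp + transp (dH dq) ph) - (transp (H q) (B e) + transp (dH e) ph)"
    by (simp add: linear_diff[OF linear_transp])
  also have "\<dots> = dp - B e"
    using dp B_tangent_equation[OF vertical_in_tangent_space[OF e]] by simp
  finally have horiz: "(H q dq, dp - B e) \<in> horiz_Hstar H q ph"
    unfolding horiz_Hstar_def by auto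
  have vert: "(e, B e) \<in> vert_Hstar Q H V q ph"
    using e unfolding vert_Hstar_eq_image by blast
  have "z = (e, B e) + (H q dq, dp - B e)"
    using tangent_space_decomp[OF dq] by (simp add: z_eq e_def add.commute)
  then show ?thesis by (rule that[OF vert horiz])
qed

lemma tangent_Hstar_decomposition:
  assumes "z \<in> tangent_Hstar Q H q ph"
  shows "\<exists>!ab. fst ab \<in> vert_Hstar Q H V q ph \<and> snd ab \<in> horiz_Hstar H q ph \<and> z = fst ab + snd ab"
proof -
  obtain v h where vh: "v \<in> vert_Hstar Q H V q ph" "h \<in> horiz_Hstar H q ph" "z = v + h"
    using tangent_Hstar_split[OF assms] by blast
  show ?thesis
  proof (rule ex1I[of _ "(v, h)"])
    show "fst (v, h) \<in> vert_Hstar Q H V q ph \<and> snd (v, h) \<in> horiz_Hstar H q ph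
      \<and> z = fst (v, h) + snd (v, h)"
      using vh by simp
    fix ab
    assume "fst ab \<in> vert_Hstar Q H V q ph \<and> snd ab \<in> horiz_Hstar H q ph \<and> z = fst ab + snd ab"
    then have "fst ab = v \<and> snd ab = h"
      using vh by (intro vert_horiz_sum_unique) auto
    then show "ab = (v, h)" by (simp add: prod_eq_iff)
  qed
qed

lemma vert_Hstar_eq_Omega_kernel:
  "vert_Hstar Q H V q ph =
     {a \<in> tangent_Hstar Q H q ph. \<forall>b\<in>tangent_Hstar Q H q ph. Omega a b = 0}"
proof (intro equalityI subsetI)
  show "a \<in> {a \<in> tangent_Hstar Q H q ph. \<forall>b\<in>tangent_Hstar Q H q ph. Omega a b = 0}"
    if "a \<in> vert_Hstar Q H V q ph" for a
    using that vert_Hstar_subset Omega_vert_tangent by blast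
next
  fix a assume a: "a \<in> {a \<in> tangent_Hstar Q H q ph. \<forall>b\<in>tangent_Hstar Q H q ph. Omega a b = 0}"
  then have "a \<in> tangent_Hstar Q H q ph" by blast
  then obtain v h where v: "v \<in> vert_Hstar Q H V q ph" and h: "h \<in> horiz_Hstar H q ph"
    and a_eq: "a = v + h"
    by (rule tangent_Hstar_split)
  have "Omega h b = 0" if "b \<in> horiz_Hstar H q ph" for b
  proof -
    have "b \<in> tangent_Hstar Q H q ph" using that horiz_Hstar_subset by blast
    then show ?thesis
      using a a_eq Omega_vert_tangent[OF v] Omega_add_left[of v h b] by simp
  qed
  then have "h = 0" using Omega_horiz_nondegenerate[OF h] by blast
  then show "a \<in> vert_Hstar Q H V q ph" using v a_eq by simp
qed

lemma bij_betw_vert_Hstar: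
  "bij_betw (\<lambda>\<epsilon>. (\<epsilon>, B \<epsilon>)) (range (V q)) (vert_Hstar Q H V q ph)"
  unfolding bij_betw_def vert_Hstar_eq_image by (simp add: inj_on_def)

end

theorem mainTheorem10:
  fixes Q :: "'e::euclidean_space set"
    and U :: "'e set"
    and Pi H V :: "'e \<Rightarrow> ('e \<Rightarrow>\<^sub>L 'e)"
    and q ph :: 'e
  assumes subm: "embedded_submanifold Q"
    and nbhd: "Q \<subseteq> U"
    and smooth_Pi: "smooth_on U Pi" and smooth_H: "smooth_on U H" and smooth_V: "smooth_on U V"
    and Pi_idem: "\<forall>x\<in>Q. Pi x o\<^sub>L Pi x = Pi x"
    and Pi_image: "\<forall>x\<in>Q. range (blinfun_apply (Pi x)) = tangent_space Q x"
    and H_idem: "\<forall>x\<in>Q. H x o\<^sub>L H x = H x"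
    and V_idem: "\<forall>x\<in>Q. V x o\<^sub>L V x = V x"
    and split: "\<forall>x\<in>Q. H x + V x = Pi x"
    and HV: "\<forall>x\<in>Q. H x o\<^sub>L V x = 0"
    and VH: "\<forall>x\<in>Q. V x o\<^sub>L H x = 0"
    and integrable: "integrable_distribution Q V"
    and q: "q \<in> Q"
    and ph: "ph \<in> range (transp (H q))"
  shows "subspace (vert_Hstar Q H V q ph) \<and> subspace (horiz_Hstar H q ph)
       \<and> vert_Hstar Q H V q ph \<subseteq> tangent_Hstar Q H q ph
       \<and> horiz_Hstar H q ph \<subseteq> tangent_Hstar Q H q ph
       \<and> (\<forall>z\<in>tangent_Hstar Q H q ph. \<exists>!ab. fst ab \<in> vert_Hstar Q H V q ph
              \<and> snd ab \<in> horiz_Hstar H q ph \<and> z = fst ab + snd ab)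
       \<and> (\<forall>a\<in>vert_Hstar Q H V q ph. \<forall>b\<in>tangent_Hstar Q H q ph. Omega a b = 0)
       \<and> vert_Hstar Q H V q ph =
           {a\<in>tangent_Hstar Q H q ph. \<forall>b\<in>tangent_Hstar Q H q ph. Omega a b = 0}
       \<and> (\<forall>a\<in>horiz_Hstar H q ph. (\<forall>b\<in>horiz_Hstar H q ph. Omega a b = 0) \<longrightarrow> a = 0)
       \<and> bij_betw (\<lambda>\<epsilon>. (\<epsilon>, Bmap Q H V q ph \<epsilon>)) (range (blinfun_apply (V q))) (vert_Hstar Q H V q ph)"
proof -
  interpret vertical_splitting Q U Pi H V q ph
    using nbhd smooth_H smooth_V Pi_idem Pi_image H_idem V_idem split HV VH integrable q ph
    by unfold_locales
  show ?thesis
    using tangent_Hstar_decomposition Omega_vert_tangent Omega_horiz_nondegenerate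
    by (intro conjI ballI impI subspace_vert_Hstar subspace_horiz_Hstar vert_Hstar_subset
        horiz_Hstar_subset vert_Hstar_eq_Omega_kernel bij_betw_vert_Hstar) auto
qed

end
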